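(* Let $k\geq 3$ and let $G$ be a $k$-uniform hypergraph. Then there is a picture $(P_0,\psi_0)$ over $G$ together with a family $(L_e)_{e\in E(G)}$ of mutually disjoint combinatorial lines such that $P_0=\bigcup_{e\in E(G)}L_e$ and $\psi_0[L_e]=e$ for every $e\in E(G)$.
   Context: A combinatorial line in $[k]^m$ is a set $\{\eta(i)\colon i\in[k]\}$ where, for some partition $[m]=C\cup M$ with $M\neq\emptyset$ and values $u_c\in[k]$ ($c\in C$), $\eta(i)$ has $c$-th coordinate $u_c$ for $c\in C$ and coordinate $i$ on every coordinate in $M$. A quasiline in $[k]^m$ is a $k$-element subset $L$ such that in every coordinate the entries of the points of $L$ are either all identical or mutually distinct. A picture over a $k$-uniform hypergraph $G$ ($k\geq3$) is a pair $(P,\psi)$ consisting of a subset $P\subseteq[k]^m$ of some Hales–Jewett cube and a map $\psi\colon P\to V(G)$ such that every quasiline $L\subseteq P$ is a combinatorial line and satisfies $\psi[L]\in E(G)$. *)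

theory Defs
  imports Main
begin

definition hj_cube :: "nat \<Rightarrow> nat \<Rightarrow> nat list set" where
  "hj_cube k m = {xs. length xs = m \<and> set xs \<subseteq> {1..k}}"

definition comb_line :: "nat \<Rightarrow> nat \<Rightarrow> nat list set \<Rightarrow> bool" where
  "comb_line k m L \<longleftrightarrow>
     (\<exists>M u. M \<subseteq> {..<m} \<and> M \<noteq> {} \<and> (\<forall>c<m. c \<notin> M \<longrightarrow> u c \<in> {1..k}) \<and>
        L = (\<lambda>i. map (\<lambda>c. if c \<in> M then i else u c) [0..<m]) ` {1..k})"

definition quasiline :: "nat \<Rightarrow> nat \<Rightarrow> nat list set \<Rightarrow> bool" where
  "quasiline k m L \<longleftrightarrow>
     L \<subseteq> hj_cube k m \<and> card L = k \<and>
     (\<forall>c<m. (\<forall>x\<in>L. \<forall>y\<in>L. x ! c = y ! c) \<or> inj_on (\<lambda>x. x ! c) L)"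

definition k_uniform_hypergraph :: "nat \<Rightarrow> 'v set \<Rightarrow> 'v set set \<Rightarrow> bool" where
  "k_uniform_hypergraph k V E \<longleftrightarrow> finite V \<and> (\<forall>e\<in>E. e \<subseteq> V \<and> card e = k)"

definition picture :: "nat \<Rightarrow> 'v set \<Rightarrow> 'v set set \<Rightarrow> nat \<Rightarrow> nat list set \<Rightarrow> (nat list \<Rightarrow> 'v) \<Rightarrow> bool" where
  "picture k V E m P \<psi> \<longleftrightarrow>
     P \<subseteq> hj_cube k m \<and> \<psi> ` P \<subseteq> V \<and>
     (\<forall>L. L \<subseteq> P \<and> quasiline k m L \<longrightarrow> comb_line k m L \<and> \<psi> ` L \<in> E)"

end

theory Submission
  imports Defs
begin

text \<open>Enumerate the edges as \<open>e\<^sub>0, \<dots>, e\<^sub>n\<^sub>-\<^sub>1\<close> and work in \<open>[k]\<^sup>2\<^sup>n\<close>. The line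
  for \<open>e\<^sub>j\<close> moves coordinate \<open>2j\<close>, carries the marker value 2 in coordinate \<open>2j+1\<close>
  and is 1 everywhere else; \<open>\<psi>\<^sub>0\<close> maps it bijectively onto \<open>e\<^sub>j\<close>. In a quasiline
  through a point of the \<open>j\<close>-th line, coordinate \<open>2j+1\<close> takes only the values 1 and 2,
  so it cannot be injective on \<open>k \<ge> 3\<close> points and must be constantly 2. Hence the
  quasiline lies in the \<open>j\<close>-th line and, having \<open>k\<close> points, equals it.\<close>

definition flag_point :: "nat \<Rightarrow> nat \<Rightarrow> nat \<Rightarrow> nat list" where
  "flag_point m j i = map (\<lambda>c. if c = 2 * j then i else if c = 2 * j + 1 then 2 else 1) [0..<m]"

definition flag_line :: "nat \<Rightarrow> nat \<Rightarrow> nat \<Rightarrow> nat list set" where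
  "flag_line k m j = flag_point m j ` {1..k}"

definition flag_of :: "nat list \<Rightarrow> nat" where
  "flag_of xs = (THE j. 2 * j + 1 < length xs \<and> xs ! (2 * j + 1) = 2)"

lemma length_flag_point [simp]: "length (flag_point m j i) = m"
  by (simp add: flag_point_def)

lemma nth_flag_point:
  "c < m \<Longrightarrow> flag_point m j i ! c = (if c = 2 * j then i else if c = 2 * j + 1 then 2 else 1)"
  by (simp add: flag_point_def)

lemma flag_point_moving_coord [simp]: "2 * j < m \<Longrightarrow> flag_point m j i ! (2 * j) = i"
  by (simp add: nth_flag_point)

lemma flag_point_marker_coord:
  "2 * j' + 1 < m \<Longrightarrow> flag_point m j i ! (2 * j' + 1) = (if j' = j then 2 else 1)"
  by (auto simp: nth_flag_point)

lemma flag_of_flag_point [simp]: "2 * j + 1 < m \<Longrightarrow> flag_of (flag_point m j i) = j"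
  unfolding flag_of_def
proof (rule the_equality)
  fix j' assume "2 * j' + 1 < length (flag_point m j i) \<and> flag_point m j i ! (2 * j' + 1) = 2"
  then show "j' = j"
    using flag_point_marker_coord[of j' m j i] by (auto split: if_splits)
qed (use flag_point_marker_coord[of j m j i] in simp)

lemma flag_line_marker_coord:
  "y \<in> flag_line k m j' \<Longrightarrow> 2 * j + 1 < m \<Longrightarrow> y ! (2 * j + 1) = (if j = j' then 2 else 1)"
  using flag_point_marker_coord by (auto simp: flag_line_def)

lemma inj_flag_point: "2 * j < m \<Longrightarrow> inj (flag_point m j)"
  by (metis flag_point_moving_coord injI)

lemma card_flag_line: "2 * j < m \<Longrightarrow> card (flag_line k m j) = k"
  unfolding flag_line_def by (simp add: card_image inj_on_subset[OF inj_flag_point])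

lemma flag_line_subset_hj_cube:
  assumes "k \<ge> 2"
  shows "flag_line k m j \<subseteq> hj_cube k m"
  using assms by (auto simp: flag_line_def hj_cube_def flag_point_def)

lemma comb_line_flag_line:
  assumes "k \<ge> 2" and "2 * j < m"
  shows "comb_line k m (flag_line k m j)"
  unfolding comb_line_def flag_line_def flag_point_def
  using assms
  by (intro exI[of _ "{2 * j}"] exI[of _ "\<lambda>c. if c = 2 * j + 1 then 2 else 1"]) auto

lemma flag_lines_disjoint:
  assumes "j \<noteq> j'" and "2 * j + 1 < m" and "2 * j' + 1 < m"
  shows "flag_line k m j \<inter> flag_line k m j' = {}"
  using assms by (auto simp: flag_line_def dest: arg_cong[where f = flag_of])

lemma quasiline_coord_const_if_few_values:
  assumes "quasiline k m L" and "c < m" and "finite A" and "card A < k"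
    and "\<And>x. x \<in> L \<Longrightarrow> x ! c \<in> A"
  shows "\<forall>x\<in>L. \<forall>y\<in>L. x ! c = y ! c"
proof (rule ccontr)
  assume "\<not> ?thesis"
  then have "inj_on (\<lambda>x. x ! c) L"
    using assms(1,2) unfolding quasiline_def by blast
  then have "card L \<le> card A"
    using assms(3,5) by (intro card_inj_on_le) auto
  then show False
    using assms(1,4) unfolding quasiline_def by simp
qed

lemma quasiline_in_flag_lines:
  assumes "k \<ge> 3" and "quasiline k m L" and "\<And>j. j \<in> J \<Longrightarrow> 2 * j + 1 < m"
    and "L \<subseteq> (\<Union>j\<in>J. flag_line k m j)"
  shows "\<exists>j\<in>J. L = flag_line k m j"
proof -
  have card_L: "card L = k"
    using assms(2) by (simp add: quasiline_def)
  then obtain x where "x \<in> L"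
    using assms(1) by fastforce
  then obtain j where j: "j \<in> J" "x \<in> flag_line k m j"
    using assms(4) by blast
  have marker: "y ! (2 * j + 1) \<in> {1, 2}" if y: "y \<in> L" for y
  proof -
    obtain j' where "y \<in> flag_line k m j'"
      using y assms(4) by blast
    then show ?thesis
      using flag_line_marker_coord[OF _ assms(3)[OF j(1)]] by auto
  qed
  have const: "\<forall>y\<in>L. \<forall>z\<in>L. y ! (2 * j + 1) = z ! (2 * j + 1)"
    using assms(1) marker
    by (intro quasiline_coord_const_if_few_values[OF assms(2) assms(3)[OF j(1)], of "{1, 2}"])
      simp_all
  have "L \<subseteq> flag_line k m j"
  proof
    fix y assume "y \<in> L"
    then obtain j' where j': "j' \<in> J" "y \<in> flag_line k m j'"
      using assms(4) by blast
    have "y ! (2 * j + 1) = x ! (2 * j + 1)"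
      using const \<open>y \<in> L\<close> \<open>x \<in> L\<close> by blast
    also have "\<dots> = 2"
      using flag_line_marker_coord[OF j(2) assms(3)[OF j(1)]] by simp
    finally have "j = j'"
      using flag_line_marker_coord[OF j'(2) assms(3)[OF j(1)]] by (simp split: if_splits)
    with j' show "y \<in> flag_line k m j" by simp
  qed
  moreover have "card (flag_line k m j) = k"
    using assms(3)[OF j(1)] by (simp add: card_flag_line)
  ultimately have "L = flag_line k m j"
    using card_L by (metis card_subset_eq finite_imageI flag_line_def finite_atLeastAtMost)
  with j(1) show ?thesis ..
qed

definition flag_labelling ::
    "'v set set \<Rightarrow> ('v set \<Rightarrow> nat) \<Rightarrow> ('v set \<Rightarrow> nat \<Rightarrow> 'v) \<Rightarrow> nat list \<Rightarrow> 'v" where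
  "flag_labelling E idx b xs = b (inv_into E idx (flag_of xs)) (xs ! (2 * flag_of xs))"

lemma flag_labelling_image_flag_line:
  assumes "inj_on idx E" and "e \<in> E" and "2 * idx e + 1 < m" and "bij_betw (b e) {1..k} e"
  shows "flag_labelling E idx b ` flag_line k m (idx e) = e"
proof -
  have "flag_labelling E idx b ` flag_line k m (idx e) = b e ` {1..k}"
    using assms(1-3) by (simp add: flag_line_def flag_labelling_def image_image)
  then show ?thesis
    using assms(4) by (simp add: bij_betw_def)
qed

lemma picture_flag_lines:
  assumes "k \<ge> 3" and "inj_on idx E" and "\<And>e. e \<in> E \<Longrightarrow> 2 * idx e + 1 < m"
    and "\<And>e. e \<in> E \<Longrightarrow> bij_betw (b e) {1..k} e" and "\<And>e. e \<in> E \<Longrightarrow> e \<subseteq> V"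
  shows "picture k V E m (\<Union>e\<in>E. flag_line k m (idx e)) (flag_labelling E idx b)"
  unfolding picture_def
proof (intro conjI allI impI)
  show "(\<Union>e\<in>E. flag_line k m (idx e)) \<subseteq> hj_cube k m"
    using assms(1) flag_line_subset_hj_cube[of k] by auto
  show "flag_labelling E idx b ` (\<Union>e\<in>E. flag_line k m (idx e)) \<subseteq> V"
    using assms(2-5) flag_labelling_image_flag_line by fastforce
next
  fix L assume "L \<subseteq> (\<Union>e\<in>E. flag_line k m (idx e)) \<and> quasiline k m L"
  then have "\<exists>j\<in>idx ` E. L = flag_line k m j"
    using assms(1,3) by (intro quasiline_in_flag_lines) auto
  then obtain e where e: "e \<in> E" "L = flag_line k m (idx e)"
    by blast
  show "comb_line k m L"
    using assms(1) assms(3)[OF e(1)] e(2) by (simp add: comb_line_flag_line)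
  show "flag_labelling E idx b ` L \<in> E"
    using flag_labelling_image_flag_line[of idx E e m b k] assms(2-4) e by simp
qed

theorem lemma4p3:
  fixes k :: nat and V :: "'v set" and E :: "'v set set"
  assumes "k \<ge> 3" and "k_uniform_hypergraph k V E"
  shows "\<exists>m P (\<psi> :: nat list \<Rightarrow> 'v) (Lf :: 'v set \<Rightarrow> nat list set).
           picture k V E m P \<psi> \<and>
           (\<forall>e\<in>E. comb_line k m (Lf e)) \<and>
           (\<forall>e\<in>E. \<forall>e'\<in>E. e \<noteq> e' \<longrightarrow> Lf e \<inter> Lf e' = {}) \<and>
           P = (\<Union>e\<in>E. Lf e) \<and>
           (\<forall>e\<in>E. \<psi> ` Lf e = e)"
proof -
  have edges: "e \<subseteq> V" "finite e" "card e = k" if "e \<in> E" for e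
    using assms(2) that finite_subset unfolding k_uniform_hypergraph_def by auto
  then have "finite E"
    using assms(2) unfolding k_uniform_hypergraph_def
    by (meson Pow_iff finite_Pow_iff finite_subset subsetI)
  then obtain idx where idx: "bij_betw idx E {0..<card E}"
    using ex_bij_betw_finite_nat by blast
  obtain b where b: "\<And>e. e \<in> E \<Longrightarrow> bij_betw (b e) {1..k} e"
    using edges(2,3) ex_bij_betw_nat_finite_1 by metis
  define m where "m = 2 * card E"
  have idx_bound: "2 * idx e + 1 < m" if "e \<in> E" for e
    using bij_betw_apply[OF idx that] by (simp add: m_def)
  have inj: "inj_on idx E"
    using idx by (rule bij_betw_imp_inj_on)
  show ?thesis
  proof (intro exI conjI ballI impI)
    show "picture k V E m (\<Union>e\<in>E. flag_line k m (idx e)) (flag_labelling E idx b)"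
      using assms(1) inj idx_bound b edges(1) by (rule picture_flag_lines)
    show "comb_line k m (flag_line k m (idx e))" if "e \<in> E" for e
      using assms(1) idx_bound[OF that] by (intro comb_line_flag_line) auto
    show "flag_line k m (idx e) \<inter> flag_line k m (idx e') = {}"
      if "e \<in> E" "e' \<in> E" "e \<noteq> e'" for e e'
      using that idx_bound inj by (intro flag_lines_disjoint) (auto dest: inj_onD)
    show "flag_labelling E idx b ` flag_line k m (idx e) = e" if "e \<in> E" for e
      using inj that idx_bound[OF that] b[OF that] by (rule flag_labelling_image_flag_line)
  qed (rule refl)
qed

end
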